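(* There is an absolute constant $C>0$ such that for all positive integers $n,d$ and every nonempty family $E$ of subsets of $[n]$, each of size at most $d$, there exists a three-stage group testing algorithm that finds the defective hyperedge in $E$ and uses at most $C\left(\sqrt d\,\log|E|+d\right)$ tests.
   Context: Group testing on a hypergraph: items are $[n]=\{1,\dots,n\}$, $E$ is a family of subsets of $[n]$ (hyperedges), exactly one $e^*\in E$ is defective (unknown); a test on a pool $T\subseteq[n]$ is positive iff $T\cap e^*\neq\emptyset$. A three-stage algorithm consists of three stages, each a non-adaptive set of tests performed in parallel: the stage-1 pools are fixed in advance, the stage-2 pools are determined by the stage-1 responses, and the stage-3 pools by the stage-1 and stage-2 responses. It finds the defective hyperedge iff for any two distinct $e^*,f\in E$ the sequences of all responses obtained when $e^*$ is defective and when $f$ is defective differ. The number of tests is the maximum over $e^*\in E$ of the total number of pools tested. Logarithms to a fixed base. *)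

theory Defs
  imports Complex_Main
begin

text \<open>Items are 1..n; a pool is a set of items; a stage is a list of pools
  tested in parallel. The response to pool T when e is defective is
  whether T meets e.\<close>

definition responses :: "nat set list \<Rightarrow> nat set \<Rightarrow> bool list" where
  "responses Ts e = map (\<lambda>T. T \<inter> e \<noteq> {}) Ts"

text \<open>A three-stage algorithm: fixed stage-1 pools P1, stage-2 pools P2 r1
  depending on stage-1 responses, stage-3 pools P3 r1 r2 depending on both.\<close>

definition outcome ::
  "nat set list \<Rightarrow> (bool list \<Rightarrow> nat set list) \<Rightarrow> (bool list \<Rightarrow> bool list \<Rightarrow> nat set list)
   \<Rightarrow> nat set \<Rightarrow> bool list \<times> bool list \<times> bool list" where
  "outcome P1 P2 P3 e =
     (let r1 = responses P1 e; r2 = responses (P2 r1) e; r3 = responses (P3 r1 r2) e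
      in (r1, r2, r3))"

definition valid_three_stage ::
  "nat \<Rightarrow> nat set list \<Rightarrow> (bool list \<Rightarrow> nat set list) \<Rightarrow> (bool list \<Rightarrow> bool list \<Rightarrow> nat set list)
   \<Rightarrow> bool" where
  "valid_three_stage n P1 P2 P3 \<longleftrightarrow>
     (\<forall>T\<in>set P1. T \<subseteq> {1..n}) \<and>
     (\<forall>r1. \<forall>T\<in>set (P2 r1). T \<subseteq> {1..n}) \<and>
     (\<forall>r1 r2. \<forall>T\<in>set (P3 r1 r2). T \<subseteq> {1..n})"

definition finds_defective ::
  "nat set set \<Rightarrow> nat set list \<Rightarrow> (bool list \<Rightarrow> nat set list) \<Rightarrow> (bool list \<Rightarrow> bool list \<Rightarrow> nat set list)
   \<Rightarrow> bool" where
  "finds_defective E P1 P2 P3 \<longleftrightarrow> inj_on (outcome P1 P2 P3) E"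

definition tests_used ::
  "nat set list \<Rightarrow> (bool list \<Rightarrow> nat set list) \<Rightarrow> (bool list \<Rightarrow> bool list \<Rightarrow> nat set list)
   \<Rightarrow> nat set \<Rightarrow> nat" where
  "tests_used P1 P2 P3 e =
     (let r1 = responses P1 e; r2 = responses (P2 r1) e
      in length P1 + length (P2 r1) + length (P3 r1 r2))"

definition num_tests ::
  "nat set set \<Rightarrow> nat set list \<Rightarrow> (bool list \<Rightarrow> nat set list) \<Rightarrow> (bool list \<Rightarrow> bool list \<Rightarrow> nat set list)
   \<Rightarrow> nat" where
  "num_tests E P1 P2 P3 = Max (tests_used P1 P2 P3 ` E)"

end

theory Submission
  imports Defs "HOL-Library.FuncSet"
begin

(* A pool keeping each item independently with probability 1/(r+1), modelled as the zero class
   of a uniformly random colouring with r+1 colours, separates two sets A, B with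
   |A \<union> B| <= 2r with probability at least |sym_diff A B| e^-2 / r.  Counting colourings
   instead of computing probabilities, a union bound over the at most |E|^2 pairs shows that
   about e^2 r ln|E| / a such pools separate all pairs at symmetric distance >= a.
   Stage 1 takes r = d and a = ceil (sqrt d); the candidates consistent with its responses are
   then all within distance < sqrt d of any one of them, f0.  Stage 2 tests the items of f0
   singly (at most d tests) and separates the remainders f - f0, of size < sqrt d, with
   r = ceil (sqrt d) and a = 1.  Each stage costs O(sqrt d log|E| + d); stage 3 is empty. *)

definition separates :: "'a set \<Rightarrow> 'a set \<Rightarrow> 'a set \<Rightarrow> bool" where
  "separates T A B \<longleftrightarrow> (T \<inter> A \<noteq> {}) \<noteq> (T \<inter> B \<noteq> {})"

lemma responses_eq_iff:
  "responses Ts e = responses Ts f \<longleftrightarrow> (\<forall>T\<in>set Ts. \<not> separates T e f)"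
  unfolding responses_def separates_def map_eq_conv by blast

definition colourings :: "'a set \<Rightarrow> nat \<Rightarrow> ('a \<Rightarrow> nat) set" where
  "colourings V q = V \<rightarrow>\<^sub>E {..<q}"

definition zero_pool :: "'a set \<Rightarrow> ('a \<Rightarrow> nat) \<Rightarrow> 'a set" where
  "zero_pool V h = {x \<in> V. h x = 0}"

definition separating_colourings :: "'a set \<Rightarrow> nat \<Rightarrow> 'a set \<Rightarrow> 'a set \<Rightarrow> ('a \<Rightarrow> nat) set" where
  "separating_colourings V q A B = {h \<in> colourings V q. separates (zero_pool V h) A B}"

lemma finite_colourings: "finite V \<Longrightarrow> finite (colourings V q)"
  unfolding colourings_def by (simp add: finite_PiE)

lemma card_colourings: "finite V \<Longrightarrow> card (colourings V q) = q ^ card V"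
  unfolding colourings_def by (simp add: card_PiE)

definition isolating_colourings :: "'a set \<Rightarrow> nat \<Rightarrow> 'a set \<Rightarrow> 'a \<Rightarrow> ('a \<Rightarrow> nat) set" where
  "isolating_colourings V q U x =
     PiE V (\<lambda>y. if y = x then {0} else if y \<in> U then {1..<q} else {..<q})"

lemma card_isolating_colourings:
  assumes V: "finite V" and U: "U \<subseteq> V" and x: "x \<in> U"
  shows "card (isolating_colourings V q U x) = (q - 1) ^ (card U - 1) * q ^ (card V - card U)"
proof -
  let ?c = "\<lambda>y. if y = x then 1 else if y \<in> U then q - 1 else q"
  have fU: "finite U" using U V finite_subset by blast
  have "card (isolating_colourings V q U x) = (\<Prod>y\<in>V. ?c y)"
    using V unfolding isolating_colourings_def by (simp add: card_PiE, intro prod.cong) auto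
  also have "\<dots> = (\<Prod>y\<in>V - U. ?c y) * (\<Prod>y\<in>U. ?c y)"
    by (rule prod.subset_diff[OF U V])
  also have "(\<Prod>y\<in>V - U. ?c y) = (\<Prod>y\<in>V - U. q)"
    using x by (intro prod.cong) auto
  also have "\<dots> = q ^ (card V - card U)"
    using U fU by (simp add: card_Diff_subset)
  also have "(\<Prod>y\<in>U. ?c y) = (q - 1) ^ (card U - 1)"
    using prod.remove[OF fU x, of ?c] fU x by simp
  finally show ?thesis
    by (simp add: mult.commute)
qed

lemma isolating_colourings_subset_separating:
  assumes A: "A \<subseteq> V" and B: "B \<subseteq> V" and x: "x \<in> sym_diff A B" and q: "0 < q"
  shows "isolating_colourings V q (A \<union> B) x \<subseteq> separating_colourings V q A B"
proof
  fix h assume h: "h \<in> isolating_colourings V q (A \<union> B) x"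
  have "isolating_colourings V q (A \<union> B) x \<subseteq> colourings V q"
    unfolding isolating_colourings_def colourings_def using q by (intro PiE_mono) auto
  with h have "h \<in> colourings V q"
    by blast
  have "h y \<noteq> 0" if "y \<in> A \<union> B" "y \<noteq> x" for y
    using h that A B unfolding isolating_colourings_def by (auto dest!: PiE_mem[of h _ _ y])
  moreover have "h x = 0" "x \<in> V"
    using h x A B unfolding isolating_colourings_def by (auto dest!: PiE_mem[of h _ _ x])
  ultimately have "zero_pool V h \<inter> A = {x} \<inter> A" "zero_pool V h \<inter> B = {x} \<inter> B"
    unfolding zero_pool_def by blast+
  with x \<open>h \<in> colourings V q\<close> show "h \<in> separating_colourings V q A B"
    unfolding separating_colourings_def separates_def by auto
qed

lemma card_separating_colourings_ge:
  assumes V: "finite V" and A: "A \<subseteq> V" and B: "B \<subseteq> V" and q: "0 < q"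
  shows "card (sym_diff A B) * ((q - 1) ^ (card (A \<union> B) - 1) * q ^ (card V - card (A \<union> B)))
           \<le> card (separating_colourings V q A B)"
proof -
  let ?S = "isolating_colourings V q (A \<union> B)"
  have U: "A \<union> B \<subseteq> V" using A B by blast
  have disjoint: "?S x \<inter> ?S y = {}" if "x \<in> A \<union> B" "x \<noteq> y" for x y
  proof -
    have "h x = 0" "h x \<noteq> 0" if "h \<in> ?S x" "h \<in> ?S y" for h
      using that \<open>x \<in> A \<union> B\<close> \<open>x \<noteq> y\<close> U unfolding isolating_colourings_def
      by (auto dest!: PiE_mem[of h _ _ x])
    then show ?thesis by blast
  qed
  have fin: "finite (sym_diff A B)" "finite (?S x)" for x
    using V A B unfolding isolating_colourings_def by (auto intro: finite_PiE rev_finite_subset)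
  have "card (sym_diff A B) * ((q - 1) ^ (card (A \<union> B) - 1) * q ^ (card V - card (A \<union> B)))
      = (\<Sum>x\<in>sym_diff A B. card (?S x))"
  proof -
    have "card (?S x) = (q - 1) ^ (card (A \<union> B) - 1) * q ^ (card V - card (A \<union> B))"
      if "x \<in> sym_diff A B" for x
      using card_isolating_colourings[OF V U] that by blast
    then show ?thesis
      by simp
  qed
  also have "\<dots> = card (\<Union>x\<in>sym_diff A B. ?S x)"
    using fin disjoint by (intro card_UN_disjoint[symmetric]) auto
  also have "\<dots> \<le> card (separating_colourings V q A B)"
    using isolating_colourings_subset_separating[OF A B _ q] finite_colourings[OF V]
    by (intro card_mono) (auto simp: separating_colourings_def)
  finally show ?thesis .
qed

lemma exp_minus_two_div_le_power_ratio:
  fixes r w :: nat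
  assumes r: "1 \<le> r" and w: "1 \<le> w" "w \<le> 2 * r"
  shows "exp (-2) / r \<le> real r ^ (w - 1) / (real r + 1) ^ w"
proof -
  have "(1 + 1 / r) ^ w \<le> (1 + 1 / real r) ^ (2 * r)"
    using w by (intro power_increasing) auto
  also have "\<dots> = ((1 + 1 / real r) ^ r) ^ 2"
    by (simp add: power_mult mult.commute)
  also have "\<dots> \<le> exp 1 ^ 2"
    using r exp_ge_one_plus_x_over_n_power_n[of r 1] by (intro power_mono) auto
  also have "\<dots> = exp 2"
    using exp_of_nat_mult[of 2 "1 :: real"] by simp
  finally have growth: "(1 + 1 / r) ^ w \<le> exp 2" .
  have "exp (-2) / r = 1 / (r * exp 2)"
    by (simp add: exp_minus field_simps)
  also have "\<dots> \<le> 1 / (r * (1 + 1 / r) ^ w)"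
    using r growth by (intro divide_left_mono mult_left_mono mult_pos_pos zero_less_power add_pos_nonneg) auto
  also have "\<dots> = real r ^ (w - 1) / (real r + 1) ^ w"
  proof -
    have "(real r + 1) ^ w = r ^ w * (1 + 1 / r) ^ w"
      using r by (simp flip: power_mult_distrib add: field_simps)
    moreover have "real r ^ w = r * r ^ (w - 1)"
      using w by (simp flip: power_Suc)
    ultimately show ?thesis
      using r by simp
  qed
  finally show ?thesis .
qed

lemma card_nonseparating_colourings_le:
  assumes V: "finite V" and A: "A \<subseteq> V" and B: "B \<subseteq> V" and "A \<noteq> B"
    and r: "1 \<le> r" and w: "card (A \<union> B) \<le> 2 * r"
  shows "real (card (colourings V (r + 1) - separating_colourings V (r + 1) A B))
           \<le> (1 - card (sym_diff A B) * exp (-2) / r) * card (colourings V (r + 1))"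
proof -
  let ?w = "card (A \<union> B)" and ?s = "real (card (sym_diff A B))"
    and ?M = "real (card (colourings V (r + 1)))"
  have "finite (A \<union> B)" "A \<union> B \<noteq> {}"
    using V A B \<open>A \<noteq> B\<close> finite_subset by blast+
  then have w1: "1 \<le> ?w"
    by (simp add: Suc_le_eq card_gt_0_iff)
  have wV: "?w \<le> card V"
    using A B V by (intro card_mono) auto
  have M: "?M = (real r + 1) ^ ?w * (real r + 1) ^ (card V - ?w)"
    using card_colourings[OF V] wV by (simp add: add.commute flip: power_add)
  have "?s * (exp (-2) / r) * ?M \<le> ?s * (real r ^ (?w - 1) / (real r + 1) ^ ?w) * ?M"
    using exp_minus_two_div_le_power_ratio[OF r w1 w]
    by (intro mult_right_mono mult_left_mono) auto
  also have "\<dots> = real (card (sym_diff A B) * (r ^ (?w - 1) * (r + 1) ^ (card V - ?w)))"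
    using M by (simp add: field_simps)
  also have "\<dots> \<le> card (separating_colourings V (r + 1) A B)"
    using card_separating_colourings_ge[OF V A B, of "r + 1"] by (simp only: of_nat_le_iff) simp
  finally have sep: "?s * (exp (-2) / r) * ?M \<le> card (separating_colourings V (r + 1) A B)" .
  have "separating_colourings V (r + 1) A B \<subseteq> colourings V (r + 1)"
    by (auto simp: separating_colourings_def)
  then have "card (colourings V (r + 1) - separating_colourings V (r + 1) A B)
      = card (colourings V (r + 1)) - card (separating_colourings V (r + 1) A B)"
    "card (separating_colourings V (r + 1) A B) \<le> card (colourings V (r + 1))"
    using finite_colourings[OF V] by (auto intro: card_Diff_subset card_mono finite_subset)
  with sep show ?thesis
    by (simp add: of_nat_diff algebra_simps)
qed

lemma exists_tuple_hitting_all: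
  fixes \<beta> :: real
  assumes X: "finite X" and P: "finite P"
    and misses: "\<And>p. p \<in> P \<Longrightarrow> card (X - G p) \<le> \<beta>"
    and few: "card P * \<beta> ^ k < real (card X) ^ k"
  shows "\<exists>H. (\<forall>i<k. H i \<in> X) \<and> (\<forall>p\<in>P. \<exists>i<k. H i \<in> G p)"
proof -
  let ?tuples = "{..<k} \<rightarrow>\<^sub>E X" and ?bad = "\<lambda>p. {..<k} \<rightarrow>\<^sub>E (X - G p)"
  have "real (card (\<Union>p\<in>P. ?bad p)) \<le> (\<Sum>p\<in>P. real (card (?bad p)))"
    using card_UN_le[OF P, of ?bad] by (simp flip: of_nat_sum)
  also have "\<dots> \<le> (\<Sum>p\<in>P. \<beta> ^ k)"
    using misses by (intro sum_mono) (simp add: card_PiE power_mono)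
  also have "\<dots> < card ?tuples"
    using few by (simp add: card_PiE)
  finally have "card (\<Union>p\<in>P. ?bad p) < card ?tuples"
    by linarith
  moreover have "finite (\<Union>p\<in>P. ?bad p)"
    using X P by (auto intro: finite_PiE)
  ultimately obtain H where H: "H \<in> ?tuples" "H \<notin> (\<Union>p\<in>P. ?bad p)"
    by (meson card_mono not_le subsetI)
  have "\<exists>i<k. H i \<in> G p" if "p \<in> P" for p
    using H that by (fastforce simp: PiE_iff)
  with H(1) show ?thesis
    by blast
qed

lemma exists_exponent_mult_power_lt_one:
  fixes N :: nat and \<delta> :: real
  assumes N: "1 \<le> N" and \<delta>: "0 < \<delta>" "\<delta> \<le> 1"
  shows "\<exists>k. N * (1 - \<delta>) ^ k < 1 \<and> real k \<le> ln N / \<delta> + 1"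
proof (intro exI conjI)
  define k where "k = nat \<lfloor>ln N / \<delta>\<rfloor> + 1"
  have "0 \<le> ln N / \<delta>"
    using N \<delta> by simp
  then have k: "ln N / \<delta> < k" "real k \<le> ln N / \<delta> + 1"
    unfolding k_def by linarith+
  then show "real k \<le> ln N / \<delta> + 1" by simp
  have "(1 - \<delta>) ^ k \<le> exp (-\<delta>) ^ k"
    using \<delta> by (intro power_mono) (auto simp: exp_ge_add_one_self[of "-\<delta>", simplified])
  also have "\<dots> = exp (- (\<delta> * k))"
    by (simp flip: exp_of_nat_mult)
  also have "\<dots> < exp (- ln N)"
    using k(1) \<delta> by (simp add: field_simps)
  also have "\<dots> = 1 / N"
    using N by (simp add: exp_minus inverse_eq_divide)
  finally show "N * (1 - \<delta>) ^ k < 1"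
    using N by (simp add: field_simps)
qed

lemma exists_pools_separating_all:
  fixes Pairs :: "('a set \<times> 'a set) set" and N :: nat and \<delta> :: real
  assumes V: "finite V" and "finite Pairs" and N: "card Pairs \<le> N" "1 \<le> N"
    and q: "0 < q" and \<delta>: "0 < \<delta>" "\<delta> \<le> 1"
    and misses: "\<And>A B. (A, B) \<in> Pairs \<Longrightarrow>
       card (colourings V q - separating_colourings V q A B) \<le> (1 - \<delta>) * card (colourings V q)"
  shows "\<exists>Ts. (\<forall>T\<in>set Ts. T \<subseteq> V) \<and> (\<forall>(A, B)\<in>Pairs. \<exists>T\<in>set Ts. separates T A B) \<and>
             length Ts \<le> ln N / \<delta> + 1"
proof -
  obtain k where k: "N * (1 - \<delta>) ^ k < 1" "real k \<le> ln N / \<delta> + 1"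
    using exists_exponent_mult_power_lt_one[OF N(2) \<delta>] by blast
  let ?X = "colourings V q" and ?G = "\<lambda>(A, B). separating_colourings V q A B"
  have "card Pairs * (1 - \<delta>) ^ k \<le> N * (1 - \<delta>) ^ k"
    using N(1) \<delta> by (intro mult_right_mono) auto
  with k(1) have "card Pairs * (1 - \<delta>) ^ k < 1"
    by linarith
  moreover have "0 < card ?X"
    using card_colourings[OF V] q by simp
  ultimately have few: "card Pairs * ((1 - \<delta>) * card ?X) ^ k < real (card ?X) ^ k"
    by (simp add: power_mult_distrib mult.assoc[symmetric])
  have "card (?X - ?G p) \<le> (1 - \<delta>) * card ?X" if "p \<in> Pairs" for p
    using misses that by (cases p) simp
  from exists_tuple_hitting_all[of ?X Pairs ?G, OF finite_colourings[OF V] \<open>finite Pairs\<close> this few]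
  obtain H where H: "\<forall>p\<in>Pairs. \<exists>i<k. H i \<in> ?G p"
    by blast
  define Ts where "Ts = map (\<lambda>i. zero_pool V (H i)) [0..<k]"
  have "\<forall>(A, B)\<in>Pairs. \<exists>T\<in>set Ts. separates T A B"
    using H unfolding Ts_def separating_colourings_def by fastforce
  moreover have "\<forall>T\<in>set Ts. T \<subseteq> V"
    unfolding Ts_def zero_pool_def by auto
  moreover have "length Ts \<le> ln N / \<delta> + 1"
    using k(2) unfolding Ts_def by simp
  ultimately show ?thesis
    by blast
qed

lemma exists_separating_pools:
  fixes Pairs :: "('a set \<times> 'a set) set" and N r a :: nat
  assumes V: "finite V" and N: "card Pairs \<le> N" "1 \<le> N" and r: "1 \<le> r" and a: "0 < a"
    and pairs: "\<And>A B. (A, B) \<in> Pairs \<Longrightarrow>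
                  A \<subseteq> V \<and> B \<subseteq> V \<and> card (A \<union> B) \<le> 2 * r \<and> a \<le> card (sym_diff A B)"
  shows "\<exists>Ts. (\<forall>T\<in>set Ts. T \<subseteq> V) \<and> (\<forall>(A, B)\<in>Pairs. \<exists>T\<in>set Ts. separates T A B) \<and>
             length Ts \<le> exp 2 * r * ln N / a + 1"
proof (cases "Pairs = {}")
  case True
  have "0 \<le> exp 2 * r * ln N / a"
    using N by simp
  with True show ?thesis
    by (intro exI[of _ "[]"]) auto
next
  case False
  then obtain A0 B0 where "(A0, B0) \<in> Pairs"
    by auto
  with pairs have "A0 \<union> B0 \<subseteq> V" "card (A0 \<union> B0) \<le> 2 * r" "a \<le> card (sym_diff A0 B0)"
    by auto
  moreover have "card (sym_diff A0 B0) \<le> card (A0 \<union> B0)"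
    using calculation(1) V by (intro card_mono) (auto intro: finite_subset)
  ultimately have "a \<le> 2 * r"
    by linarith
  define \<delta> where "\<delta> = a * exp (-2) / r"
  have "\<delta> \<le> 2 * exp (-2)"
    using \<open>a \<le> 2 * r\<close> r unfolding \<delta>_def by (simp add: field_simps)
  also have "\<dots> \<le> 1"
    using exp_ge_add_one_self[of 2] by (simp add: exp_minus field_simps)
  finally have \<delta>: "0 < \<delta>" "\<delta> \<le> 1"
    using a r unfolding \<delta>_def by auto
  have "finite Pairs"
    using pairs V by (intro finite_subset[of Pairs "Pow V \<times> Pow V"]) auto
  moreover have "card (colourings V (r + 1) - separating_colourings V (r + 1) A B)
      \<le> (1 - \<delta>) * card (colourings V (r + 1))" if "(A, B) \<in> Pairs" for A B
  proof -
    have "A \<subseteq> V" "B \<subseteq> V" "A \<noteq> B" "card (A \<union> B) \<le> 2 * r" "a \<le> card (sym_diff A B)"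
      using that pairs[of A B] a by auto
    then have "card (colourings V (r + 1) - separating_colourings V (r + 1) A B)
        \<le> (1 - card (sym_diff A B) * exp (-2) / r) * card (colourings V (r + 1))"
      using card_nonseparating_colourings_le[OF V _ _ _ r] by simp
    also have "\<dots> \<le> (1 - \<delta>) * card (colourings V (r + 1))"
      using \<open>a \<le> card (sym_diff A B)\<close> r unfolding \<delta>_def
      by (intro mult_right_mono diff_left_mono divide_right_mono mult_right_mono) auto
    finally show ?thesis .
  qed
  moreover have "ln N / \<delta> = exp 2 * r * ln N / a"
    unfolding \<delta>_def using a r by (simp add: exp_minus field_simps)
  ultimately show ?thesis
    using exists_pools_separating_all[OF V _ N, of "r + 1" \<delta>] \<delta> by simp
qed

lemma finds_defective_if_classes_separated:
  assumes "\<And>r1. inj_on (responses (P2 r1)) {e \<in> E. responses P1 e = r1}"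
  shows "finds_defective E P1 P2 P3"
  unfolding finds_defective_def
proof (rule inj_onI)
  fix e f assume "e \<in> E" "f \<in> E" "outcome P1 P2 P3 e = outcome P1 P2 P3 f"
  then have "responses P1 e = responses P1 f"
    "responses (P2 (responses P1 e)) e = responses (P2 (responses P1 e)) f"
    "e \<in> {g \<in> E. responses P1 g = responses P1 e}" "f \<in> {g \<in> E. responses P1 g = responses P1 e}"
    unfolding outcome_def Let_def by auto
  with assms show "e = f"
    by (blast dest: inj_onD)
qed

lemma num_tests_le:
  assumes "finite E" "E \<noteq> {}" "\<And>e. e \<in> E \<Longrightarrow> real (tests_used P1 P2 P3 e) \<le> B"
  shows "real (num_tests E P1 P2 P3) \<le> B"
proof -
  have "num_tests E P1 P2 P3 \<in> tests_used P1 P2 P3 ` E"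
    unfolding num_tests_def using assms(1,2) by (intro Max_in) auto
  with assms(3) show ?thesis
    by auto
qed

lemma exists_stage_one_pools:
  assumes V: "finite V" and E: "E \<subseteq> Pow V" "E \<noteq> {}" and d: "\<forall>e\<in>E. card e \<le> d"
    and "0 < d" "0 < t"
  shows "\<exists>P. (\<forall>T\<in>set P. T \<subseteq> V) \<and>
             (\<forall>e\<in>E. \<forall>f\<in>E. responses P e = responses P f \<longrightarrow> card (sym_diff e f) < t) \<and>
             length P \<le> 2 * exp 2 * d * ln (card E) / t + 1"
proof -
  define Pairs where "Pairs = {(e, f) \<in> E \<times> E. t \<le> card (sym_diff e f)}"
  have "finite E"
    using V E by (meson finite_Pow_iff finite_subset)
  then have N: "card Pairs \<le> card E ^ 2" "1 \<le> card E ^ 2"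
    using E(2) card_mono[of "E \<times> E" Pairs]
    by (auto simp: Pairs_def card_cartesian_product power2_eq_square Suc_le_eq card_gt_0_iff)
  have "card (e \<union> f) \<le> 2 * d" if "e \<in> E" "f \<in> E" for e f
  proof -
    have "card e \<le> d" "card f \<le> d"
      using d that by auto
    then show ?thesis
      using card_Un_le[of e f] by linarith
  qed
  then obtain P where P: "\<forall>T\<in>set P. T \<subseteq> V" "\<forall>(e, f)\<in>Pairs. \<exists>T\<in>set P. separates T e f"
    "length P \<le> exp 2 * d * ln (card E ^ 2) / t + 1"
    using exists_separating_pools[OF V N, of d t] E \<open>0 < d\<close> \<open>0 < t\<close>
    unfolding Pairs_def by fastforce
  have "responses P e = responses P f \<longrightarrow> card (sym_diff e f) < t" if "e \<in> E" "f \<in> E" for e f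
    using P(2) that unfolding responses_eq_iff Pairs_def by fastforce
  moreover have "ln (real (card E ^ 2)) = 2 * ln (card E)"
    using N(2) by (simp add: ln_realpow)
  ultimately show ?thesis
    using P by (intro exI[of _ P]) (auto simp: mult.assoc mult.left_commute)
qed

lemma exists_distinguishing_pools:
  assumes V: "finite V" and F: "F \<subseteq> Pow V" "card F \<le> m" "1 \<le> m" and r: "1 \<le> r"
    and small: "\<And>A B. A \<in> F \<Longrightarrow> B \<in> F \<Longrightarrow> card (A \<union> B) \<le> 2 * r"
  shows "\<exists>L. (\<forall>T\<in>set L. T \<subseteq> V) \<and> inj_on (responses L) F \<and> length L \<le> 2 * exp 2 * r * ln m + 1"
proof -
  define Pairs where "Pairs = {(A, B) \<in> F \<times> F. A \<noteq> B}"
  have "finite F"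
    using V F by (meson finite_Pow_iff finite_subset)
  then have "card Pairs \<le> card (F \<times> F)"
    unfolding Pairs_def by (intro card_mono) auto
  also have "\<dots> \<le> m ^ 2"
    using F by (simp add: card_cartesian_product power2_eq_square mult_mono)
  finally have N: "card Pairs \<le> m ^ 2" "1 \<le> m ^ 2"
    using F by auto
  have "A \<subseteq> V \<and> B \<subseteq> V \<and> card (A \<union> B) \<le> 2 * r \<and> 1 \<le> card (sym_diff A B)"
    if "(A, B) \<in> Pairs" for A B
  proof -
    have AB: "A \<in> F" "B \<in> F" "A \<noteq> B"
      using that unfolding Pairs_def by auto
    then have "finite (sym_diff A B)" "sym_diff A B \<noteq> {}"
      using V F by (auto intro: finite_subset)
    with AB F small show ?thesis
      by (auto simp: Suc_le_eq card_gt_0_iff)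
  qed
  then obtain L where L: "\<forall>T\<in>set L. T \<subseteq> V" "\<forall>(A, B)\<in>Pairs. \<exists>T\<in>set L. separates T A B"
    "length L \<le> exp 2 * r * ln (m ^ 2) + 1"
    using exists_separating_pools[OF V N r, of 1] by auto
  have "inj_on (responses L) F"
    using L(2) unfolding Pairs_def by (fastforce intro: inj_onI simp: responses_eq_iff)
  moreover have "ln (real (m ^ 2)) = 2 * ln m"
    using F by (simp add: ln_realpow)
  ultimately show ?thesis
    using L by (intro exI[of _ L]) (auto simp: mult.assoc mult.left_commute)
qed

lemma inj_on_responses_singletons_append:
  assumes "finite f0" and inj: "inj_on (responses Ts) ((\<lambda>f. f - f0) ` F)"
    and disjoint: "\<forall>T\<in>set Ts. T \<inter> f0 = {}"
  shows "inj_on (responses (map (\<lambda>x. {x}) (sorted_list_of_set f0) @ Ts)) F"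
proof (rule inj_onI)
  fix f g assume "f \<in> F" "g \<in> F"
    and "responses (map (\<lambda>x. {x}) (sorted_list_of_set f0) @ Ts) f
       = responses (map (\<lambda>x. {x}) (sorted_list_of_set f0) @ Ts) g"
  then have no_sep: "\<not> separates T f g" if "T \<in> (\<lambda>x. {x}) ` f0 \<union> set Ts" for T
    using that \<open>finite f0\<close> by (simp add: responses_eq_iff)
  then have "f \<inter> f0 = g \<inter> f0"
    unfolding separates_def by blast
  moreover have "responses Ts (f - f0) = responses Ts (g - f0)"
    using no_sep disjoint unfolding responses_eq_iff separates_def by blast
  then have "f - f0 = g - f0"
    using inj \<open>f \<in> F\<close> \<open>g \<in> F\<close> by (auto dest: inj_onD)
  ultimately show "f = g"
    by blast
qed

lemma exists_stage_two_pools: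
  assumes V: "finite V" and F: "F \<subseteq> Pow V" "card F \<le> m" "1 \<le> m"
    and d: "\<forall>f\<in>F. card f \<le> d" and "0 < t"
    and close: "\<forall>f\<in>F. \<forall>g\<in>F. card (sym_diff f g) < t"
  shows "\<exists>L. (\<forall>T\<in>set L. T \<subseteq> V) \<and> inj_on (responses L) F \<and>
             length L \<le> d + 2 * exp 2 * t * ln m + 1"
proof (cases "F = {}")
  case True
  have "0 \<le> 2 * exp 2 * t * ln m"
    using F by simp
  with True show ?thesis
    by (intro exI[of _ "[]"]) auto
next
  case False
  then obtain f0 where f0: "f0 \<in> F"
    by blast
  have "finite F" "finite f0"
    using V F f0 by (auto intro: finite_subset)
  let ?R = "(\<lambda>f. f - f0) ` F"
  have small: "card (f - f0) < t" if "f \<in> F" for f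
  proof -
    have "card (f - f0) \<le> card (sym_diff f f0)"
      using that f0 V F by (intro card_mono) (auto intro: finite_subset)
    with close f0 that show ?thesis
      by (meson le_less_trans)
  qed
  then have small_R: "card A < t" if "A \<in> ?R" for A
    using that by blast
  have "card (A \<union> B) \<le> 2 * t" if "A \<in> ?R" "B \<in> ?R" for A B
    using card_Un_le[of A B] small_R[OF that(1)] small_R[OF that(2)] by linarith
  moreover have "?R \<subseteq> Pow (V - f0)" "card ?R \<le> m"
    using F card_image_le[OF \<open>finite F\<close>, of "\<lambda>f. f - f0"] by auto
  ultimately obtain Ts where Ts: "\<forall>T\<in>set Ts. T \<subseteq> V - f0" "inj_on (responses Ts) ?R"
    "length Ts \<le> 2 * exp 2 * t * ln m + 1"
    using exists_distinguishing_pools[of "V - f0" ?R m t] V F \<open>0 < t\<close> by auto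
  define L where "L = map (\<lambda>x. {x}) (sorted_list_of_set f0) @ Ts"
  have "inj_on (responses L) F"
    unfolding L_def using \<open>finite f0\<close> Ts(1,2) by (intro inj_on_responses_singletons_append) auto
  moreover have "\<forall>T\<in>set L. T \<subseteq> V"
    unfolding L_def using \<open>finite f0\<close> Ts(1) f0 F by auto
  moreover have "length L \<le> d + 2 * exp 2 * t * ln m + 1"
    using Ts(3) d f0 unfolding L_def by fastforce
  ultimately show ?thesis
    by blast
qed

lemma two_stage_cost_le:
  fixes d t l L :: real
  assumes d: "1 \<le> d" and t: "sqrt d \<le> t" "t \<le> sqrt d + 1" and l: "0 \<le> l" "l \<le> L"
  shows "2 * exp 2 * d * l / t + 1 + (d + 2 * exp 2 * t * l + 1) \<le> (6 * exp 2 + 3) * (sqrt d * L + d)"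
proof -
  have "1 \<le> sqrt d"
    using d by simp
  then have "0 < t"
    using t by linarith
  have "d / t \<le> d / sqrt d"
    using d t \<open>1 \<le> sqrt d\<close> \<open>0 < t\<close> by (intro divide_left_mono mult_pos_pos) auto
  also have "\<dots> = sqrt d"
    using d by (simp add: real_div_sqrt)
  finally have "d / t + t \<le> 3 * sqrt d"
    using t \<open>1 \<le> sqrt d\<close> by linarith
  then have balance: "2 * exp 2 * l * (d / t + t) \<le> 2 * exp 2 * l * (3 * sqrt d)"
    using l by (intro mult_left_mono) auto
  have "2 * exp 2 * d * l / t + 1 + (d + 2 * exp 2 * t * l + 1) = 2 * exp 2 * l * (d / t + t) + d + 2"
    by (simp add: field_simps)
  also have "\<dots> \<le> 2 * exp 2 * l * (3 * sqrt d) + d + 2"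
    using balance by linarith
  also have "\<dots> = 6 * exp 2 * (sqrt d * l) + d + 2"
    by simp
  also have "\<dots> \<le> 6 * exp 2 * (sqrt d * L) + 3 * d"
  proof -
    have "6 * exp 2 * (sqrt d * l) \<le> 6 * exp 2 * (sqrt d * L)"
      using l d by (intro mult_left_mono) auto
    then show ?thesis
      using d by linarith
  qed
  also have "\<dots> \<le> (6 * exp 2 + 3) * (sqrt d * L + d)"
    using l \<open>1 \<le> sqrt d\<close> by (simp add: distrib_left distrib_right)
  finally show ?thesis .
qed

lemma ln_le_log_2: "1 \<le> x \<Longrightarrow> ln x \<le> log 2 x"
  using ln_le_minus_one[of 2] by (simp add: log_def le_divide_eq mult_left_le)

lemma exists_three_stage_algorithm:
  assumes d: "0 < d" and E: "E \<noteq> {}" "E \<subseteq> Pow {1..n}" and card_E: "\<forall>e\<in>E. card e \<le> d"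
  shows "\<exists>P1 P2 P3. valid_three_stage n P1 P2 P3 \<and> finds_defective E P1 P2 P3 \<and>
           real (num_tests E P1 P2 P3) \<le> (6 * exp 2 + 3) * (sqrt d * log 2 (card E) + d)"
proof -
  define m where "m = card E"
  define t where "t = nat \<lceil>sqrt d\<rceil>"
  have "finite {1..n}" "finite E"
    using E(2) by (auto intro: finite_subset)
  then have m: "1 \<le> m"
    using E(1) unfolding m_def by (simp add: Suc_le_eq card_gt_0_iff)
  have "1 \<le> sqrt d"
    using d by simp
  then have t: "sqrt d \<le> t" "t \<le> sqrt d + 1" "0 < t"
    unfolding t_def by linarith+
  obtain P1 where P1: "\<forall>T\<in>set P1. T \<subseteq> {1..n}"
    "\<forall>e\<in>E. \<forall>f\<in>E. responses P1 e = responses P1 f \<longrightarrow> card (sym_diff e f) < t"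
    "length P1 \<le> 2 * exp 2 * d * ln m / t + 1"
    using exists_stage_one_pools[OF \<open>finite {1..n}\<close> E(2,1) card_E d t(3)] unfolding m_def by blast
  define candidates where "candidates r1 = {e \<in> E. responses P1 e = r1}" for r1
  have "\<exists>L. (\<forall>T\<in>set L. T \<subseteq> {1..n}) \<and> inj_on (responses L) (candidates r1) \<and>
           length L \<le> d + 2 * exp 2 * t * ln m + 1" for r1
    using \<open>finite E\<close> E(2) card_E P1(2) m t(3)
    by (intro exists_stage_two_pools) (auto simp: candidates_def m_def intro: card_mono)
  then obtain P2 where P2: "\<forall>T\<in>set (P2 r1). T \<subseteq> {1..n}" "inj_on (responses (P2 r1)) (candidates r1)"
    "length (P2 r1) \<le> d + 2 * exp 2 * t * ln m + 1" for r1
    by metis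
  define P3 :: "bool list \<Rightarrow> bool list \<Rightarrow> nat set list" where "P3 = (\<lambda>_ _. [])"
  have "valid_three_stage n P1 P2 P3"
    using P1(1) P2(1) unfolding valid_three_stage_def P3_def by auto
  moreover have "finds_defective E P1 P2 P3"
    using P2(2) unfolding candidates_def by (rule finds_defective_if_classes_separated)
  moreover have "real (tests_used P1 P2 P3 e) \<le> (6 * exp 2 + 3) * (sqrt d * log 2 m + d)" for e
  proof -
    have "real (tests_used P1 P2 P3 e) \<le> 2 * exp 2 * d * ln m / t + 1 + (d + 2 * exp 2 * t * ln m + 1)"
      using add_mono[OF P1(3) P2(3)] unfolding tests_used_def P3_def Let_def by simp
    also have "\<dots> \<le> (6 * exp 2 + 3) * (sqrt d * log 2 m + d)"
      using d t m ln_le_log_2[of m] by (intro two_stage_cost_le) auto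
    finally show ?thesis .
  qed
  ultimately show ?thesis
    using num_tests_le[OF \<open>finite E\<close> E(1)] unfolding m_def by blast
qed

theorem corollary3:
  shows "\<exists>C>0. \<forall>(n::nat) (d::nat) (E::nat set set).
           n > 0 \<longrightarrow> d > 0 \<longrightarrow> E \<noteq> {} \<longrightarrow> E \<subseteq> Pow {1..n} \<longrightarrow>
           (\<forall>e\<in>E. card e \<le> d) \<longrightarrow>
           (\<exists>P1 P2 P3. valid_three_stage n P1 P2 P3 \<and> finds_defective E P1 P2 P3 \<and>
              real (num_tests E P1 P2 P3)
                \<le> C * (sqrt (real d) * log 2 (real (card E)) + real d))"
proof (intro exI[of _ "6 * exp 2 + 3"] conjI allI impI)
  show "(0::real) < 6 * exp 2 + 3"
    by (simp add: add_pos_pos)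
next
  fix n d :: nat and E :: "nat set set"
  assume "0 < d" "E \<noteq> {}" "E \<subseteq> Pow {1..n}" "\<forall>e\<in>E. card e \<le> d"
  then show "\<exists>P1 P2 P3. valid_three_stage n P1 P2 P3 \<and> finds_defective E P1 P2 P3 \<and>
      real (num_tests E P1 P2 P3) \<le> (6 * exp 2 + 3) * (sqrt d * log 2 (card E) + d)"
    by (rule exists_three_stage_algorithm)
qed

end
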